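(* Let $n\ge 0$ be an integer and let $a,b\in\mathbb{C}$ with $a\neq 0$. Then \[ \sum_{k=0}^n\frac{(-1)^k}{1+k}\binom{a+k}{k}\binom{b+n}{n-k}=\frac{1}{a}\binom{b+n}{1+n}-\frac{1}{a}\binom{b-a+n}{1+n}. \]
   Context: For $x\in\mathbb{C}$ and an integer $m\ge0$, the generalized binomial coefficient is $\binom{x}{m}=\frac{x(x-1)\cdots(x-m+1)}{m!}$ (with $\binom{x}{0}=1$). *)

theory Defs
  imports Complex_Main
begin

end

theory Submission
  imports Defs "HOL-Computational_Algebra.Formal_Power_Series"
begin

text \<open>Absorption turns the summand into \<open>-(1/a) * (-a gchoose (k+1))\<close>; after shifting the
  index, the sum becomes Vandermonde's convolution of \<open>-a\<close> and \<open>b + n\<close> at \<open>n + 1\<close> with its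
  \<open>k = 0\<close> term removed.\<close>

lemma Suc_times_gbinomial_add_of_nat:
  fixes a :: "'a::field_char_0"
  shows "of_nat (Suc k) * ((a + of_nat k) gchoose Suc k) = a * ((a + of_nat k) gchoose k)"
  using gbinomial_mult_1[of "a + of_nat k" k] by (simp add: algebra_simps)

lemma gbinomial_add_of_nat_div_Suc:
  fixes a :: "'a::field_char_0"
  assumes "a \<noteq> 0"
  shows "(-1)^k / (1 + of_nat k) * ((a + of_nat k) gchoose k) = - (1/a) * ((-a) gchoose Suc k)"
proof -
  have "((-a) gchoose Suc k) = (-1)^Suc k * ((a + of_nat k) gchoose Suc k)"
    by (simp add: gbinomial_minus)
  also have "\<dots> = (-1)^Suc k * (a * ((a + of_nat k) gchoose k) / of_nat (Suc k))"
    by (simp add: Suc_times_gbinomial_add_of_nat[symmetric] del: of_nat_Suc)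
  finally show ?thesis
    using assms by (simp add: field_simps)
qed

theorem mainTheorem15:
  fixes n :: nat and a b :: complex
  assumes "a \<noteq> 0"
  shows "(\<Sum>k=0..n. (-1)^k / (1 + of_nat k) * ((a + of_nat k) gchoose k) * ((b + of_nat n) gchoose (n - k)))
         = (1 / a) * ((b + of_nat n) gchoose (1 + n)) - (1 / a) * ((b - a + of_nat n) gchoose (1 + n))"
proof -
  let ?f = "\<lambda>j. ((-a) gchoose j) * ((b + of_nat n) gchoose (Suc n - j))"
  have "(\<Sum>k=0..n. (-1)^k / (1 + of_nat k) * ((a + of_nat k) gchoose k) * ((b + of_nat n) gchoose (n - k)))
      = (\<Sum>k=0..n. - (1/a) * ?f (Suc k))"
    by (rule sum.cong) (simp_all only: gbinomial_add_of_nat_div_Suc[OF assms] mult.assoc diff_Suc_Suc)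
  also have "\<dots> = - (1/a) * (\<Sum>k=0..n. ?f (Suc k))"
    by (simp add: sum_distrib_left)
  also have "(\<Sum>k=0..n. ?f (Suc k)) = (\<Sum>k=0..Suc n. ?f k) - ?f 0"
    by (simp only: sum.atLeast0_atMost_Suc_shift diff_Suc_Suc add_diff_cancel_left' o_def)
  also have "(\<Sum>k=0..Suc n. ?f k) = (-a + (b + of_nat n)) gchoose Suc n"
    by (rule gbinomial_Vandermonde)
  finally show ?thesis
    by (simp add: algebra_simps)
qed

end
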